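(* Under the setting below, every vertex of $G_{15}$ has degree at most $15$.
   Context: Setting: $V$ is a finite set of points (vertices) in the plane and $S$ a finite set of simple polygonal obstacles, pairwise non-intersecting, all of whose corners lie in $V$; each vertex is a corner of at most one obstacle and occurs at most once on its boundary. General position: no three vertices collinear and no two vertices on a line parallel to a cone boundary ray. Points $p,q$ are visible if segment $pq$ does not properly intersect any obstacle (touching at vertices or running along boundaries is allowed, meeting an obstacle interior is not). Cones: around each vertex $u$ the plane is partitioned into six cones of angle $\pi/3$ with apex $u$; $C_0^u$ has the upward vertical bisector, and counterclockwise the cones are $C_0^u,\overline{C_2^u},C_1^u,\overline{C_0^u},C_2^u,\overline{C_1^u}$ (positive cones $C_i$, negative cones $\overline{C_i}$, indices mod 3). If the obstacle having $u$ as a corner splits a cone so that there are vertices visible from $u$ on both sides of the obstacle within it, the cone is regarded as two subcones; otherwise a single subcone. $G_\infty$: for every vertex $u$ and every positive subcone of $u$, add an edge from $u$ to the vertex visible from $u$ in that subcone whose orthogonal projection onto the cone's bisector is closest to $u$. $G_{15}$ is obtained from $G_\infty$ by, for every vertex $u$ and every negative subcone of $u$, deleting all edges of $G_\infty$ incident to $u$ that lie in that subcone except the leftmost one (clockwise extreme as seen from $u$), the rightmost one (counterclockwise extreme), and the one to the closest vertex (smallest projection onto the cone's bisector). *)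

theory Defs
  imports "HOL-Analysis.Analysis"
begin

type_synonym pt = "real \<times> real"

definition dir :: "real \<Rightarrow> pt" where
  "dir th = (cos th, sin th)"

definition dotp :: "pt \<Rightarrow> pt \<Rightarrow> real" where
  "dotp a b = fst a * fst b + snd a * snd b"

definition cross :: "pt \<Rightarrow> pt \<Rightarrow> real" where
  "cross a b = fst a * snd b - snd a * fst b"

definition poly_edge :: "pt list \<Rightarrow> nat \<Rightarrow> pt set" where
  "poly_edge P i = closed_segment (P ! i) (P ! ((i + 1) mod length P))"

definition poly_boundary :: "pt list \<Rightarrow> pt set" where
  "poly_boundary P = (\<Union>i<length P. poly_edge P i)"

definition simple_polygon :: "pt list \<Rightarrow> bool" where
  "simple_polygon P \<longleftrightarrow> length P \<ge> 3 \<and> distinct P \<and>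
     (\<forall>i<length P. \<forall>j<length P. i \<noteq> j \<longrightarrow>
        poly_edge P i \<inter> poly_edge P j =
          (if j = (i + 1) mod length P then {P ! j}
           else if i = (j + 1) mod length P then {P ! i} else {}))"

definition obstacle_region :: "pt list \<Rightarrow> pt set" where
  "obstacle_region P = poly_boundary P \<union> inside (poly_boundary P)"

definition visible :: "pt list set \<Rightarrow> pt \<Rightarrow> pt \<Rightarrow> bool" where
  "visible S p q \<longleftrightarrow> (\<forall>Ob\<in>S. closed_segment p q \<inter> inside (poly_boundary Ob) = {})"

definition valid_setting :: "pt set \<Rightarrow> pt list set \<Rightarrow> bool" where
  "valid_setting V S \<longleftrightarrow>
     finite V \<and> finite S \<and>
     (\<forall>Ob\<in>S. simple_polygon Ob \<and> set Ob \<subseteq> V) \<and>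
     (\<forall>O1\<in>S. \<forall>O2\<in>S. O1 \<noteq> O2 \<longrightarrow> obstacle_region O1 \<inter> obstacle_region O2 = {}) \<and>
     (\<forall>v. \<forall>O1\<in>S. \<forall>O2\<in>S. v \<in> set O1 \<and> v \<in> set O2 \<longrightarrow> O1 = O2) \<and>
     (\<forall>a\<in>V. \<forall>b\<in>V. \<forall>c\<in>V. a \<noteq> b \<and> a \<noteq> c \<and> b \<noteq> c \<longrightarrow> \<not> collinear {a, b, c}) \<and>
     (\<forall>u\<in>V. \<forall>v\<in>V. u \<noteq> v \<longrightarrow> (\<forall>k<(3::nat). cross (v - u) (dir (real k * pi / 3)) \<noteq> 0))"

text \<open>Bisector angles: positive cone C_i has bisector pi/2 + 2 pi i/3, negative cone
  the opposite direction. Cone k with bisector b is the half-open angular range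
  [b - pi/6, b + pi/6) around the apex.\<close>
definition pos_bis :: "nat \<Rightarrow> real" where
  "pos_bis i = pi / 2 + 2 * pi * real i / 3"

definition neg_bis :: "nat \<Rightarrow> real" where
  "neg_bis i = 3 * pi / 2 + 2 * pi * real i / 3"

definition in_cone :: "real \<Rightarrow> pt \<Rightarrow> pt \<Rightarrow> bool" where
  "in_cone b u v \<longleftrightarrow> v \<noteq> u \<and> dotp (v - u) (dir b) \<ge> cos (pi / 6) * norm (v - u) \<and>
     \<not> (\<exists>t>0. v - u = t *\<^sub>R dir (b + pi / 6))"

definition proj :: "real \<Rightarrow> pt \<Rightarrow> pt \<Rightarrow> real" where
  "proj b u v = dotp (v - u) (dir b)"

text \<open>Two vertices v, w (in the same cone of u) are in the same subcone iff the obstacle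
  having u as a corner does not lie between the rays uv and uw near u.\<close>
definition same_side :: "pt list set \<Rightarrow> pt \<Rightarrow> pt \<Rightarrow> pt \<Rightarrow> bool" where
  "same_side S u v w \<longleftrightarrow> (\<forall>Ob\<in>S. u \<in> set Ob \<longrightarrow>
     (\<exists>e>0. \<forall>s t. 0 \<le> s \<and> 0 \<le> t \<and> s + t \<le> e \<longrightarrow>
        u + s *\<^sub>R (v - u) + t *\<^sub>R (w - u) \<notin> inside (poly_boundary Ob)))"

definition subcone_of :: "pt set \<Rightarrow> pt list set \<Rightarrow> real \<Rightarrow> pt \<Rightarrow> pt \<Rightarrow> pt set" where
  "subcone_of V S b u v = {w \<in> V. in_cone b u w \<and> visible S u w \<and> same_side S u v w}"

definition ginf_choice :: "pt set \<Rightarrow> pt list set \<Rightarrow> pt \<Rightarrow> pt \<Rightarrow> bool" where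
  "ginf_choice V S u v \<longleftrightarrow> u \<in> V \<and> v \<in> V \<and>
     (\<exists>i<(3::nat). in_cone (pos_bis i) u v \<and> visible S u v \<and>
        (\<forall>w\<in>subcone_of V S (pos_bis i) u v. proj (pos_bis i) u v \<le> proj (pos_bis i) u w))"

definition ginf_edge :: "pt set \<Rightarrow> pt list set \<Rightarrow> pt \<Rightarrow> pt \<Rightarrow> bool" where
  "ginf_edge V S u v \<longleftrightarrow> ginf_choice V S u v \<or> ginf_choice V S v u"

text \<open>Edge uv survives the pruning at u: if v lies in a negative subcone of u, v must be
  the clockwise-extreme, counterclockwise-extreme or closest G_inf neighbour of u there.\<close>
definition keep_at :: "pt set \<Rightarrow> pt list set \<Rightarrow> pt \<Rightarrow> pt \<Rightarrow> bool" where
  "keep_at V S u v \<longleftrightarrow> (\<forall>i<(3::nat). in_cone (neg_bis i) u v \<and> visible S u v \<longrightarrow>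
     (let N = {w \<in> subcone_of V S (neg_bis i) u v. ginf_edge V S u w} in
        (\<forall>w\<in>N. cross (v - u) (w - u) \<ge> 0) \<or>
        (\<forall>w\<in>N. cross (v - u) (w - u) \<le> 0) \<or>
        (\<forall>w\<in>N. proj (neg_bis i) u v \<le> proj (neg_bis i) u w)))"

definition g15_edge :: "pt set \<Rightarrow> pt list set \<Rightarrow> pt \<Rightarrow> pt \<Rightarrow> bool" where
  "g15_edge V S u v \<longleftrightarrow> ginf_edge V S u v \<and> keep_at V S u v \<and> keep_at V S v u"

definition degree15 :: "pt set \<Rightarrow> pt list set \<Rightarrow> pt \<Rightarrow> nat" where
  "degree15 V S u = card {v \<in> V. g15_edge V S u v}"

end

(*
  The G15-neighbours of u are of two kinds: vertices that u itself chooses in a positive cone,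
  at most one per subcone, and G-infinity neighbours in a negative cone that survive the pruning
  at u, at most three per subcone (the two angularly extreme ones and the closest one).  If no
  cone were split this would give 3 * 1 + 3 * 3 = 12.

  Near a corner u of an obstacle its boundary consists of two edges leaving u in directions a
  and b, and within a small disc the inside of the obstacle is a union of the two open sectors
  they bound.  Consequently the directions visible from u fall into at most two classes of
  mutually "same side" directions, and two visible vertices on different sides have the edge
  direction a in the convex cone spanned by their directions.  Every split cone therefore
  contains u + a; as the six cones are disjoint, at most one cone is split, which adds at most
  3 further neighbours.
*)

theory Submission
  imports Defs
begin

lemma cross_add_left: "cross (x + y) z = cross x z + cross y z"
  and cross_add_right: "cross z (x + y) = cross z x + cross z y"
  and cross_diff_left: "cross (x - y) z = cross x z - cross y z"
  and cross_diff_right: "cross z (x - y) = cross z x - cross z y"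
  and cross_scaleR_left: "cross (c *\<^sub>R x) z = c * cross x z"
  and cross_scaleR_right: "cross z (c *\<^sub>R x) = c * cross z x"
  and cross_minus_left: "cross (- x) z = - cross x z"
  and cross_minus_right: "cross z (- x) = - cross z x"
  by (auto simp: cross_def algebra_simps)

lemmas cross_bilinear = cross_add_left cross_add_right cross_diff_left cross_diff_right
  cross_scaleR_left cross_scaleR_right cross_minus_left cross_minus_right

lemma cross_self [simp]: "cross x x = 0"
  by (simp add: cross_def)

lemma cross_zero_left [simp]: "cross 0 x = 0"
  and cross_zero_right [simp]: "cross x 0 = 0"
  by (simp_all add: cross_def)

lemma cross_antisym: "cross x y = - cross y x"
  by (simp add: cross_def)

lemma cross_nonneg_antisym: "cross x y \<ge> 0 \<Longrightarrow> cross y x \<ge> 0 \<Longrightarrow> cross x y = 0"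
  and cross_nonpos_antisym: "cross x y \<le> 0 \<Longrightarrow> cross y x \<le> 0 \<Longrightarrow> cross x y = 0"
  by (simp_all add: cross_def mult.commute)

lemma cross_cramer: "cross a b *\<^sub>R x = cross x b *\<^sub>R a + cross a x *\<^sub>R b"
  by (cases a, cases b, cases x) (simp add: cross_def algebra_simps)

lemma cross_eq_0_imp_collinear:
  assumes "cross (x - u) (y - u) = 0"
  shows "collinear {u, x, y}"
proof -
  define a b where "a = x - u" and "b = y - u"
  have ab: "cross a b = 0"
    using assms by (simp add: a_def b_def)
  have "collinear {0, a, b}"
  proof (cases "a = 0")
    case False
    define a' where "a' = (- snd a, fst a)"
    have "cross a a' = (fst a)\<^sup>2 + (snd a)\<^sup>2"
      by (simp add: a'_def cross_def power2_eq_square)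
    also have "\<dots> > 0"
      using False by (simp add: prod_eq_iff sum_power2_gt_zero_iff)
    finally have "b = inverse (cross a a') *\<^sub>R (cross a a' *\<^sub>R b)"
      by simp
    also have "\<dots> = (inverse (cross a a') * cross b a') *\<^sub>R a"
      using ab by (simp add: cross_cramer[of a a' b])
    finally show ?thesis
      by (metis collinear_lemma)
  qed (simp add: collinear_lemma)
  then show ?thesis
    using collinear_3[of x u y] by (simp add: a_def b_def insert_commute)
qed

lemma dotp_scaleR_left: "dotp (c *\<^sub>R x) y = c * dotp x y"
  by (simp add: dotp_def algebra_simps)

lemma cross_dir_dir: "cross (dir a) (dir b) = sin (b - a)"
  by (simp add: cross_def dir_def sin_diff algebra_simps)

lemma dotp_dir_dir: "dotp (dir a) (dir b) = cos (b - a)"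
  by (simp add: dotp_def dir_def cos_diff algebra_simps)

lemma dotp_dir_eq_cross: "dotp x (dir b) = cross x (dir (b + pi / 2))"
  by (simp add: dotp_def cross_def dir_def cos_add sin_add)

lemma dir_add_pi: "dir (b + pi) = - dir b"
  by (simp add: dir_def)

lemma dir_add: "dir (b + c) = cos c *\<^sub>R dir b + sin c *\<^sub>R dir (b + pi / 2)"
  by (simp add: dir_def cos_add sin_add algebra_simps)

lemma dir_coordinates: "x = dotp x (dir b) *\<^sub>R dir b + cross (dir b) x *\<^sub>R dir (b + pi / 2)"
proof (cases x)
  case (Pair x1 x2)
  have one: "cos b * cos b + sin b * sin b = 1"
    by (metis power2_eq_square sin_cos_squared_add2)
  have "x1 * (cos b * cos b) + x1 * (sin b * sin b) = x1"
    "x2 * (cos b * cos b) + x2 * (sin b * sin b) = x2"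
    using one by (metis distrib_left mult.right_neutral)+
  then show ?thesis
    using Pair by (simp add: dotp_def cross_def dir_def cos_add sin_add algebra_simps)
qed

lemma norm_dir_coordinates: "norm x = sqrt ((dotp x (dir b))\<^sup>2 + (cross (dir b) x)\<^sup>2)"
proof (cases x)
  case (Pair x1 x2)
  have "(dotp x (dir b))\<^sup>2 + (cross (dir b) x)\<^sup>2 = (x1\<^sup>2 + x2\<^sup>2) * ((cos b)\<^sup>2 + (sin b)\<^sup>2)"
    unfolding Pair dotp_def cross_def dir_def fst_conv snd_conv by algebra
  then show ?thesis
    using Pair by (simp add: norm_prod_def)
qed

section \<open>Cones\<close>

lemma sqrt_le_iff_sq: "0 \<le> A \<Longrightarrow> sqrt A \<le> p \<longleftrightarrow> 0 \<le> p \<and> A \<le> p\<^sup>2"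
  by (meson order_trans real_le_lsqrt real_sqrt_ge_zero sqrt_le_D)

lemma sqrt3_half_norm_le_iff:
  fixes p q :: real
  shows "sqrt 3 / 2 * sqrt (p\<^sup>2 + q\<^sup>2) \<le> p \<longleftrightarrow> sqrt 3 * \<bar>q\<bar> \<le> p"
proof -
  have "sqrt 3 / 2 * sqrt (p\<^sup>2 + q\<^sup>2) = sqrt (3 * (p\<^sup>2 + q\<^sup>2) / 4)"
    by (simp only: real_sqrt_divide real_sqrt_mult) (simp add: real_sqrt_unique)
  moreover have "sqrt 3 * \<bar>q\<bar> = sqrt (3 * q\<^sup>2)"
    by (simp add: real_sqrt_mult)
  moreover have "3 * (p\<^sup>2 + q\<^sup>2) / 4 \<le> p\<^sup>2 \<longleftrightarrow> 3 * q\<^sup>2 \<le> p\<^sup>2"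
    by simp
  ultimately show ?thesis
    by (simp add: sqrt_le_iff_sq)
qed

text \<open>Here \<open>p\<close> and \<open>q\<close> are the coordinates of a point relative to the apex, along the bisector
  of a cone and along its normal.\<close>
lemma cone_coordinates_iff:
  fixes p q :: real
  shows "\<not> (p = 0 \<and> q = 0) \<and> sqrt 3 / 2 * sqrt (p\<^sup>2 + q\<^sup>2) \<le> p \<and> \<not> (p = sqrt 3 * q \<and> q > 0) \<longleftrightarrow>
    \<not> (p = 0 \<and> q = 0) \<and> sqrt 3 * q + p \<ge> 0 \<and> p - sqrt 3 * q > 0"
proof -
  define r where "r = sqrt 3 * q"
  have "sqrt 3 * \<bar>q\<bar> = \<bar>r\<bar>" "q = 0 \<longleftrightarrow> r = 0" "q > 0 \<longleftrightarrow> r > 0"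
    by (simp_all add: r_def abs_mult zero_less_mult_iff)
  then show ?thesis
    unfolding sqrt3_half_norm_le_iff r_def[symmetric] by (auto simp: abs_if)
qed

lemma dir_add_pi6: "dir (b + pi / 6) = (sqrt 3 / 2) *\<^sub>R dir b + (1 / 2) *\<^sub>R dir (b + pi / 2)"
  using dir_add[of b "pi / 6"] by (simp add: cos_30 sin_30)

lemma dir_diff_pi6: "dir (b - pi / 6) = (sqrt 3 / 2) *\<^sub>R dir b - (1 / 2) *\<^sub>R dir (b + pi / 2)"
  using dir_add[of b "- pi / 6"] by (simp add: cos_30 sin_30)

lemma cross_dir_diff_pi6: "cross (dir (b - pi / 6)) x = (sqrt 3 * cross (dir b) x + dotp x (dir b)) / 2"
proof -
  have "cross (dir b) (dir (b + pi / 2)) = 1" "cross (dir (b + pi / 2)) (dir b) = - 1"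
    by (simp_all add: cross_dir_dir)
  then show ?thesis
    unfolding dir_diff_pi6 by (subst (1) dir_coordinates[of x b]) (simp add: cross_bilinear)
qed

lemma cross_dir_add_pi6: "cross x (dir (b + pi / 6)) = (dotp x (dir b) - sqrt 3 * cross (dir b) x) / 2"
proof -
  have "cross (dir b) (dir (b + pi / 2)) = 1" "cross (dir (b + pi / 2)) (dir b) = - 1"
    by (simp_all add: cross_dir_dir)
  then show ?thesis
    unfolding dir_add_pi6 by (subst (1) dir_coordinates[of x b]) (simp add: cross_bilinear)
qed

lemma dir_coordinates_eq_0_iff: "x = 0 \<longleftrightarrow> dotp x (dir b) = 0 \<and> cross (dir b) x = 0"
  by (metis dir_coordinates[of x b] add_0 scaleR_zero_left cross_zero_right dotp_scaleR_left
      mult_zero_left)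

lemma ray_dir_add_pi6_iff:
  "(\<exists>t>0. x = t *\<^sub>R dir (b + pi / 6)) \<longleftrightarrow>
     dotp x (dir b) = sqrt 3 * cross (dir b) x \<and> cross (dir b) x > 0"
proof
  assume "\<exists>t>0. x = t *\<^sub>R dir (b + pi / 6)"
  then obtain t where t: "t > 0" "x = t *\<^sub>R dir (b + pi / 6)"
    by blast
  have coords: "dotp (dir (b + pi / 6)) (dir b) = sqrt 3 / 2" "cross (dir b) (dir (b + pi / 6)) = 1 / 2"
    by (simp_all add: dotp_dir_dir cross_dir_dir cos_30 sin_30)
  show "dotp x (dir b) = sqrt 3 * cross (dir b) x \<and> cross (dir b) x > 0"
    unfolding t(2) by (simp add: dotp_scaleR_left cross_scaleR_right coords t(1))
next
  assume *: "dotp x (dir b) = sqrt 3 * cross (dir b) x \<and> cross (dir b) x > 0"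
  then have "x = (2 * cross (dir b) x) *\<^sub>R dir (b + pi / 6)"
    by (subst (1) dir_coordinates[of x b]) (simp add: dir_add_pi6 scaleR_add_right)
  with * show "\<exists>t>0. x = t *\<^sub>R dir (b + pi / 6)"
    by (intro exI[of _ "2 * cross (dir b) x"]) simp
qed

lemma in_cone_iff_cross:
  "in_cone b u v \<longleftrightarrow>
     v \<noteq> u \<and> cross (dir (b - pi / 6)) (v - u) \<ge> 0 \<and> cross (v - u) (dir (b + pi / 6)) > 0"
proof -
  define p q where "p = dotp (v - u) (dir b)" and "q = cross (dir b) (v - u)"
  have "v \<noteq> u \<longleftrightarrow> \<not> (p = 0 \<and> q = 0)"
    using dir_coordinates_eq_0_iff[of "v - u" b] by (simp add: p_def q_def)
  moreover have "dotp (v - u) (dir b) \<ge> cos (pi / 6) * norm (v - u) \<longleftrightarrow>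
      sqrt 3 / 2 * sqrt (p\<^sup>2 + q\<^sup>2) \<le> p"
    using norm_dir_coordinates[of "v - u" b] by (simp add: cos_30 p_def q_def)
  moreover have "(\<exists>t>0. v - u = t *\<^sub>R dir (b + pi / 6)) \<longleftrightarrow> p = sqrt 3 * q \<and> q > 0"
    unfolding p_def q_def by (rule ray_dir_add_pi6_iff)
  ultimately have "in_cone b u v \<longleftrightarrow>
      \<not> (p = 0 \<and> q = 0) \<and> sqrt 3 / 2 * sqrt (p\<^sup>2 + q\<^sup>2) \<le> p \<and> \<not> (p = sqrt 3 * q \<and> q > 0)"
    unfolding in_cone_def by argo
  also have "\<dots> \<longleftrightarrow> \<not> (p = 0 \<and> q = 0) \<and> sqrt 3 * q + p \<ge> 0 \<and> p - sqrt 3 * q > 0"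
    by (rule cone_coordinates_iff)
  finally show ?thesis
    using \<open>v \<noteq> u \<longleftrightarrow> _\<close> by (simp add: cross_dir_diff_pi6 cross_dir_add_pi6 p_def q_def)
qed

lemma in_cone_opposite: "in_cone (b + pi) u v \<longleftrightarrow> in_cone b v u"
proof -
  have "b + pi - pi / 6 = (b - pi / 6) + pi" "b + pi + pi / 6 = (b + pi / 6) + pi"
    by simp_all
  then have "dir (b + pi - pi / 6) = - dir (b - pi / 6)" "dir (b + pi + pi / 6) = - dir (b + pi / 6)"
    by (simp_all only: dir_add_pi)
  moreover have "v - u = - (u - v)"
    by simp
  ultimately show ?thesis
    unfolding in_cone_iff_cross by (metis cross_minus_left cross_minus_right minus_minus)
qed

lemma neg_bis_eq_pos_bis_plus_pi: "neg_bis i = pos_bis i + pi"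
  by (simp add: neg_bis_def pos_bis_def)

lemma in_cone_nonneg_combination:
  assumes "in_cone b u v" "in_cone b u w" "z - u = \<alpha> *\<^sub>R (v - u) + \<beta> *\<^sub>R (w - u)"
    and "\<alpha> \<ge> 0" "\<beta> \<ge> 0" "\<alpha> > 0 \<or> \<beta> > 0"
  shows "in_cone b u z"
proof -
  let ?l = "dir (b - pi / 6)" and ?r = "dir (b + pi / 6)"
  have "cross ?l (v - u) \<ge> 0" "cross (v - u) ?r > 0" "cross ?l (w - u) \<ge> 0" "cross (w - u) ?r > 0"
    using assms(1,2) by (auto simp: in_cone_iff_cross)
  moreover have "cross ?l (z - u) = \<alpha> * cross ?l (v - u) + \<beta> * cross ?l (w - u)"
    "cross (z - u) ?r = \<alpha> * cross (v - u) ?r + \<beta> * cross (w - u) ?r"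
    unfolding assms(3) by (simp_all add: cross_bilinear)
  ultimately have "cross ?l (z - u) \<ge> 0" "cross (z - u) ?r > 0"
    using assms(4-6) by (auto intro: add_nonneg_nonneg add_pos_nonneg add_nonneg_pos)
  then show ?thesis
    by (auto simp: in_cone_iff_cross)
qed

definition hexdir :: "nat \<Rightarrow> pt" where
  "hexdir k = dir (real k * pi / 3)"

lemma hexdir_add2: "hexdir (k + 2) = hexdir (k + 1) - hexdir k"
proof -
  have "dir (t + pi / 3) + dir (t - pi / 3) = dir t" for t
    by (simp add: dir_def cos_add cos_diff sin_add sin_diff cos_60)
  from this[of "real (k + 1) * pi / 3"] show ?thesis
    by (simp add: hexdir_def algebra_simps add_divide_distrib)
qed

lemma hexdir_add3: "hexdir (k + 3) = - hexdir k"
  using hexdir_add2[of k] hexdir_add2[of "k + 1"] by (simp add: eval_nat_numeral)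

lemma hexdir_add_mult3: "hexdir (k + 3 * q) = (- 1) ^ q *\<^sub>R hexdir k"
proof (induction q)
  case (Suc q)
  then show ?case
    using hexdir_add3[of "k + 3 * q"] by (simp add: ac_simps)
qed simp

lemma hexdir_mod3: "hexdir k = hexdir (k mod 3) \<or> hexdir k = - hexdir (k mod 3)"
  using hexdir_add_mult3[of "k mod 3" "k div 3"] by (cases "even (k div 3)") simp_all

text \<open>Cone \<open>m\<close> lies between the rays in directions \<open>hexdir m\<close> and \<open>hexdir (m + 1)\<close>; the
  positive cones \<open>C\<^sub>0, C\<^sub>1, C\<^sub>2\<close> are \<open>m = 1, 3, 5\<close> and the negative ones are \<open>m = 4, 6, 8\<close>.\<close>
definition cone_bis :: "nat \<Rightarrow> real" where
  "cone_bis m = real m * pi / 3 + pi / 6"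

lemma pos_bis_eq_cone_bis: "pos_bis i = cone_bis (2 * i + 1)"
  by (simp add: pos_bis_def cone_bis_def field_simps)

lemma neg_bis_eq_cone_bis: "neg_bis i = cone_bis (2 * i + 4)"
  by (simp add: neg_bis_def cone_bis_def field_simps)

lemma in_cone_bis_iff:
  "in_cone (cone_bis m) u v \<longleftrightarrow>
     v \<noteq> u \<and> cross (hexdir m) (v - u) \<ge> 0 \<and> cross (v - u) (hexdir (m + 1)) > 0"
proof -
  have "cone_bis m - pi / 6 = real m * pi / 3" "cone_bis m + pi / 6 = real (m + 1) * pi / 3"
    by (simp_all add: cone_bis_def field_simps)
  then show ?thesis
    by (simp only: in_cone_iff_cross hexdir_def)
qed

lemma in_cone_bis_add_mult6: "in_cone (cone_bis (m + 6 * q)) u v \<longleftrightarrow> in_cone (cone_bis m) u v"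
proof -
  have "hexdir (m + 6 * q + i) = hexdir (m + i)" for i
    using hexdir_add_mult3[of "m + i" "2 * q"] by (simp add: ac_simps)
  from this[of 0] this[of 1] show ?thesis
    by (simp add: in_cone_bis_iff)
qed

text \<open>Writing \<open>A j\<close> for the cross product of \<open>hexdir (m + j)\<close> with the point, the recurrence
  \<open>A (j + 2) = A (j + 1) - A j\<close> propagates the sign conditions of cone \<open>m\<close> to all other cones.\<close>
lemma in_cone_bis_disjoint:
  assumes "in_cone (cone_bis m) u v" "0 < j" "j < 6"
  shows "\<not> in_cone (cone_bis (m + j)) u v"
proof -
  define A where "A j = cross (hexdir (m + j)) (v - u)" for j
  have rec: "A (j + 2) = A (j + 1) - A j" for j
    unfolding A_def using hexdir_add2[of "m + j"] by (simp add: ac_simps cross_diff_left)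
  have cone_A: "in_cone (cone_bis (m + j)) u v \<longleftrightarrow> v \<noteq> u \<and> A j \<ge> 0 \<and> A (j + 1) < 0" for j
    by (simp add: A_def in_cone_bis_iff cross_antisym[of "v - u"] ac_simps)
  have "A 0 \<ge> 0" "A 1 < 0"
    using assms(1) cone_A[of 0] by simp_all
  moreover have "j = 1 \<or> j = 2 \<or> j = 3 \<or> j = 4 \<or> j = 5"
    using assms(2,3) by auto
  ultimately show ?thesis
    using rec[of 0] rec[of 1] rec[of 2] rec[of 3] rec[of 4] cone_A[of j] by (auto simp: numeral_eq_Suc)
qed

lemma in_cone_bis_unique:
  assumes "in_cone (cone_bis m) u v" "in_cone (cone_bis n) u v"
  shows "m mod 6 = n mod 6"
proof -
  have *: "m mod 6 = n mod 6" if "in_cone (cone_bis m) u v" "in_cone (cone_bis n) u v" "m \<le> n" for m n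
  proof -
    define j where "j = (n - m) mod 6"
    have "n = m + j + 6 * ((n - m) div 6)"
      using \<open>m \<le> n\<close> by (simp add: j_def)
    then have "in_cone (cone_bis (m + j)) u v"
      using that(2) in_cone_bis_add_mult6 by metis
    then have "j = 0"
      using in_cone_bis_disjoint[OF that(1)] j_def by fastforce
    then show ?thesis
      by (metis \<open>m \<le> n\<close> dvd_eq_mod_eq_0 j_def mod_eq_dvd_iff_nat)
  qed
  show ?thesis
    using *[OF assms] *[OF assms(2,1)] by linarith
qed

lemma proj_cone_bis: "proj (cone_bis m) u v = cross (v - u) (hexdir (m + 2))"
proof -
  have "cone_bis m + pi / 2 = real (m + 2) * pi / 3"
    by (simp add: cone_bis_def field_simps)
  then show ?thesis
    by (simp only: proj_def dotp_dir_eq_cross hexdir_def)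
qed

lemma valid_setting_finite: "valid_setting V S \<Longrightarrow> finite V"
  by (simp add: valid_setting_def)

lemma valid_setting_obstacle:
  "valid_setting V S \<Longrightarrow> Ob \<in> S \<Longrightarrow> simple_polygon Ob \<and> set Ob \<subseteq> V"
  by (simp add: valid_setting_def)

lemma valid_setting_corner_unique:
  "valid_setting V S \<Longrightarrow> O1 \<in> S \<Longrightarrow> O2 \<in> S \<Longrightarrow> u \<in> set O1 \<Longrightarrow> u \<in> set O2 \<Longrightarrow> O1 = O2"
  unfolding valid_setting_def by blast

lemma valid_setting_not_collinear:
  "valid_setting V S \<Longrightarrow> a \<in> V \<Longrightarrow> b \<in> V \<Longrightarrow> c \<in> V \<Longrightarrow> a \<noteq> b \<Longrightarrow> a \<noteq> c \<Longrightarrow> b \<noteq> c \<Longrightarrow>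
    \<not> collinear {a, b, c}"
  unfolding valid_setting_def by blast

lemma valid_setting_cross_eq_0:
  assumes "valid_setting V S" "u \<in> V" "v \<in> V" "w \<in> V" "v \<noteq> u" "w \<noteq> u" "cross (v - u) (w - u) = 0"
  shows "v = w"
proof (rule ccontr)
  assume "v \<noteq> w"
  then show False
    using valid_setting_not_collinear[OF assms(1-4)] cross_eq_0_imp_collinear[OF assms(7)] assms(5,6)
    by blast
qed

lemma valid_setting_cross_hexdir_nonzero:
  assumes "valid_setting V S" "u \<in> V" "v \<in> V" "u \<noteq> v"
  shows "cross (v - u) (hexdir k) \<noteq> 0"
proof -
  have "cross (v - u) (hexdir (k mod 3)) \<noteq> 0"
    using assms unfolding valid_setting_def hexdir_def by simp
  then show ?thesis
    using hexdir_mod3[of k] by (auto simp: cross_minus_right)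
qed

lemma valid_setting_proj_cone_bis_inj:
  assumes "valid_setting V S" "v \<in> V" "w \<in> V" "proj (cone_bis m) u v = proj (cone_bis m) u w"
  shows "v = w"
proof (rule ccontr)
  assume "v \<noteq> w"
  have "cross (w - v) (hexdir (m + 2)) = cross (w - u) (hexdir (m + 2)) - cross (v - u) (hexdir (m + 2))"
    by (simp add: cross_diff_left[symmetric])
  then have "cross (w - v) (hexdir (m + 2)) = 0"
    using assms(4) by (simp add: proj_cone_bis)
  then show False
    using valid_setting_cross_hexdir_nonzero[OF assms(1-3) \<open>v \<noteq> w\<close>] by simp
qed

lemma visible_sym: "visible S u v \<longleftrightarrow> visible S v u"
  by (simp add: visible_def closed_segment_commute)

section \<open>The two sides of an obstacle at its corner\<close>

text \<open>Cramer's rule, first in the basis \<open>a, b\<close> to see that \<open>x, y\<close> is positively oriented, then in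
  the basis \<open>x, y\<close> to express \<open>a\<close>.\<close>
lemma wedge_edge_between:
  assumes ab: "cross a b > 0" and x: "cross a x \<le> 0" and y: "cross y b \<le> 0"
    and st: "0 \<le> s" "0 \<le> t" and z: "z = s *\<^sub>R x + t *\<^sub>R y" "cross a z > 0" "cross z b > 0"
  shows "\<exists>\<alpha> \<beta>. \<alpha> \<ge> 0 \<and> \<beta> \<ge> 0 \<and> (\<alpha> > 0 \<or> \<beta> > 0) \<and> a = \<alpha> *\<^sub>R x + \<beta> *\<^sub>R y"
proof -
  have "cross a z = s * cross a x + t * cross a y" "s * cross a x \<le> 0"
    using z(1) x st by (simp_all add: cross_bilinear mult_nonneg_nonpos)
  then have "t * cross a y > 0"
    using z(2) by linarith
  then have ay: "cross a y > 0"
    using st(2) by (simp add: zero_less_mult_iff)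
  have "cross a b * cross z y = cross (cross a b *\<^sub>R z) y"
    by (simp add: cross_bilinear)
  also have "\<dots> = cross z b * cross a y + cross a z * cross b y"
    by (simp only: cross_cramer[of a b z] cross_bilinear)
  also have "\<dots> > 0"
  proof (rule add_pos_nonneg)
    show "cross z b * cross a y > 0"
      using ay z(3) by simp
    show "cross a z * cross b y \<ge> 0"
      using z(2) y cross_antisym[of b y] by (simp add: mult_nonneg_nonpos)
  qed
  finally have "cross z y > 0"
    using ab by (simp add: zero_less_mult_iff)
  moreover have "cross z y = s * cross x y"
    using z(1) by (simp add: cross_bilinear)
  ultimately have xy: "cross x y > 0"
    using st(1) by (simp add: zero_less_mult_iff)
  have "a = inverse (cross x y) *\<^sub>R (cross x y *\<^sub>R a)"
    using xy by simp
  also have "\<dots> = (inverse (cross x y) * cross a y) *\<^sub>R x + (inverse (cross x y) * cross x a) *\<^sub>R y"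
    by (simp add: cross_cramer[of x y a] scaleR_add_right)
  finally have "a = (inverse (cross x y) * cross a y) *\<^sub>R x + (inverse (cross x y) * cross x a) *\<^sub>R y" .
  moreover have "cross x a \<ge> 0"
    using x cross_antisym[of x a] by simp
  ultimately show ?thesis
    using ay xy by (metis inverse_positive_iff_positive mult_nonneg_nonneg mult_pos_pos less_imp_le)
qed

text \<open>Models the inside of an obstacle near its corner \<open>u\<close>, whose edges leave \<open>u\<close> in directions
  \<open>a\<close> and \<open>b\<close> with \<open>cross a b > 0\<close>: \<open>u + x\<close> is inside iff \<open>x\<close> points into the open convex
  sector between \<open>a\<close> and \<open>b\<close> and \<open>kin\<close> holds, or into the open reflex sector and \<open>hin\<close> holds.\<close>
definition corner_inside :: "bool \<Rightarrow> bool \<Rightarrow> pt \<Rightarrow> pt \<Rightarrow> pt \<Rightarrow> bool" where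
  "corner_inside kin hin a b x \<longleftrightarrow>
     (kin \<and> cross a x > 0 \<and> cross x b > 0) \<or> (hin \<and> (cross a x < 0 \<or> cross x b < 0))"

lemma corner_inside_scaleR:
  "c > 0 \<Longrightarrow> corner_inside kin hin a b (c *\<^sub>R x) \<longleftrightarrow> corner_inside kin hin a b x"
  by (simp add: corner_inside_def cross_scaleR_left cross_scaleR_right zero_less_mult_iff
      mult_less_0_iff)

lemma corner_inside_nonneg_combination:
  assumes x: "\<not> corner_inside kin hin a b x" and y: "\<not> corner_inside kin hin a b y"
    and st: "0 \<le> s" "0 \<le> t" and z: "corner_inside kin hin a b (s *\<^sub>R x + t *\<^sub>R y)"
  shows "kin \<and> cross a (s *\<^sub>R x + t *\<^sub>R y) > 0 \<and> cross (s *\<^sub>R x + t *\<^sub>R y) b > 0 \<and>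
    (cross a x \<le> 0 \<or> cross x b \<le> 0) \<and> (cross a y \<le> 0 \<or> cross y b \<le> 0)"
proof -
  let ?z = "s *\<^sub>R x + t *\<^sub>R y"
  have "cross a ?z \<ge> 0 \<and> cross ?z b \<ge> 0" if hin
  proof -
    have "cross a x \<ge> 0" "cross x b \<ge> 0" "cross a y \<ge> 0" "cross y b \<ge> 0"
      using x y \<open>hin\<close> by (auto simp: corner_inside_def)
    then show ?thesis
      using st by (simp add: cross_bilinear)
  qed
  then have "kin \<and> cross a ?z > 0 \<and> cross ?z b > 0"
    using z by (auto simp: corner_inside_def)
  then show ?thesis
    using x y by (auto simp: corner_inside_def)
qed

lemma corner_inside_separated:
  assumes ab: "cross a b > 0"
    and "\<not> corner_inside kin hin a b x" "\<not> corner_inside kin hin a b y" "0 \<le> s" "0 \<le> t"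
    and "corner_inside kin hin a b (s *\<^sub>R x + t *\<^sub>R y)"
  shows "\<exists>\<alpha> \<beta>. \<alpha> \<ge> 0 \<and> \<beta> \<ge> 0 \<and> (\<alpha> > 0 \<or> \<beta> > 0) \<and> a = \<alpha> *\<^sub>R x + \<beta> *\<^sub>R y"
proof -
  let ?z = "s *\<^sub>R x + t *\<^sub>R y"
  have z: "cross a ?z > 0" "cross ?z b > 0"
    and x: "cross a x \<le> 0 \<or> cross x b \<le> 0" and y: "cross a y \<le> 0 \<or> cross y b \<le> 0"
    using corner_inside_nonneg_combination[OF assms(2-6)] by auto
  have nonpos: "s * A + t * B \<le> 0" if "A \<le> 0" "B \<le> 0" for A B
    using assms(4,5) that by (simp add: add_nonpos_nonpos mult_nonneg_nonpos)
  have "cross a ?z = s * cross a x + t * cross a y" "cross ?z b = s * cross x b + t * cross y b"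
    by (simp_all add: cross_bilinear)
  then have "\<not> (cross a x \<le> 0 \<and> cross a y \<le> 0)" "\<not> (cross x b \<le> 0 \<and> cross y b \<le> 0)"
    using z nonpos by fastforce+
  then consider "cross a x \<le> 0" "cross y b \<le> 0" | "cross a y \<le> 0" "cross x b \<le> 0"
    using x y by linarith
  then show ?thesis
  proof cases
    case 1
    then show ?thesis
      using wedge_edge_between[OF ab _ _ assms(4,5) refl z] by blast
  next
    case 2
    have "?z = t *\<^sub>R y + s *\<^sub>R x"
      by simp
    then obtain \<alpha> \<beta> where "\<alpha> \<ge> 0" "\<beta> \<ge> 0" "\<alpha> > 0 \<or> \<beta> > 0" "a = \<alpha> *\<^sub>R y + \<beta> *\<^sub>R x"
      using wedge_edge_between[OF ab 2 assms(5,4) _ z[unfolded \<open>?z = _\<close>]] by blast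
    then show ?thesis
      by (intro exI[of _ \<beta>] exI[of _ \<alpha>]) auto
  qed
qed

lemma corner_inside_two_classes:
  obtains X1 X2 where
    "\<forall>x\<in>X1. \<forall>y\<in>X1. \<forall>s\<ge>0. \<forall>t\<ge>0. \<not> corner_inside kin hin a b (s *\<^sub>R x + t *\<^sub>R y)"
    "\<forall>x\<in>X2. \<forall>y\<in>X2. \<forall>s\<ge>0. \<forall>t\<ge>0. \<not> corner_inside kin hin a b (s *\<^sub>R x + t *\<^sub>R y)"
    "\<forall>x. \<not> corner_inside kin hin a b x \<longrightarrow> x \<in> X1 \<union> X2"
proof
  let ?M = "corner_inside kin hin a b"
  have nonpos: "s * A + t * B \<le> 0" if "0 \<le> s" "0 \<le> t" "A \<le> 0" "B \<le> 0" for s t A B :: real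
    using that by (simp add: add_nonpos_nonpos mult_nonneg_nonpos)
  let ?X1 = "{x. \<not> ?M x \<and> (kin \<longrightarrow> cross a x \<le> 0)}"
  let ?X2 = "{x. \<not> ?M x \<and> (kin \<longrightarrow> cross x b \<le> 0)}"
  show "\<forall>x\<in>?X1. \<forall>y\<in>?X1. \<forall>s\<ge>0. \<forall>t\<ge>0. \<not> ?M (s *\<^sub>R x + t *\<^sub>R y)"
  proof (intro ballI allI impI notI)
    fix x y s t
    assume that: "x \<in> ?X1" "y \<in> ?X1" "0 \<le> s" "0 \<le> t" and "?M (s *\<^sub>R x + t *\<^sub>R y)"
    then have "kin" "s * cross a x + t * cross a y > 0"
      using corner_inside_nonneg_combination[of kin hin a b x y s t] by (simp_all add: cross_bilinear)
    then show False
      using that nonpos[of s t "cross a x" "cross a y"] by simp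
  qed
  show "\<forall>x\<in>?X2. \<forall>y\<in>?X2. \<forall>s\<ge>0. \<forall>t\<ge>0. \<not> ?M (s *\<^sub>R x + t *\<^sub>R y)"
  proof (intro ballI allI impI notI)
    fix x y s t
    assume that: "x \<in> ?X2" "y \<in> ?X2" "0 \<le> s" "0 \<le> t" and "?M (s *\<^sub>R x + t *\<^sub>R y)"
    then have "kin" "s * cross x b + t * cross y b > 0"
      using corner_inside_nonneg_combination[of kin hin a b x y s t] by (simp_all add: cross_bilinear)
    then show False
      using that nonpos[of s t "cross x b" "cross y b"] by simp
  qed
  show "\<forall>x. \<not> ?M x \<longrightarrow> x \<in> ?X1 \<union> ?X2"
    by (auto simp: corner_inside_def)
qed

lemma closed_segment_near_start:
  fixes u p y :: pt
  assumes "norm (y - u) \<le> norm (p - u)"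
  shows "y \<in> closed_segment u p \<longleftrightarrow> (\<exists>l\<ge>0. y - u = l *\<^sub>R (p - u))"
proof
  assume "y \<in> closed_segment u p"
  then show "\<exists>l\<ge>0. y - u = l *\<^sub>R (p - u)"
    by (auto simp: in_segment algebra_simps)
next
  assume "\<exists>l\<ge>0. y - u = l *\<^sub>R (p - u)"
  then obtain l where l: "l \<ge> 0" "y - u = l *\<^sub>R (p - u)"
    by blast
  show "y \<in> closed_segment u p"
  proof (cases "p = u")
    case False
    then have "l \<le> 1"
      using assms l by simp
    then show ?thesis
      using l unfolding in_segment by (intro exI[of _ l]) (auto simp: algebra_simps)
  qed (use l in simp)
qed

lemma ray_iff_cross:
  assumes "cross a b > 0"
  shows "(\<exists>l\<ge>0. x = l *\<^sub>R a) \<longleftrightarrow> cross a x = 0 \<and> cross x b \<ge> 0"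
proof
  assume x: "cross a x = 0 \<and> cross x b \<ge> 0"
  have "x = inverse (cross a b) *\<^sub>R (cross a b *\<^sub>R x)"
    using assms by simp
  also have "\<dots> = (inverse (cross a b) * cross x b) *\<^sub>R a"
    using x by (simp add: cross_cramer[of a b x])
  finally show "\<exists>l\<ge>0. x = l *\<^sub>R a"
    using x assms by (intro exI[of _ "inverse (cross a b) * cross x b"]) simp
qed (use assms in \<open>auto simp: cross_bilinear\<close>)

lemma convex_cross_halfplane: "convex {y. cross c (y - u) > 0}"
proof -
  have "{y. cross c (y - u) > 0} = {y. inner (- snd c, fst c) y > cross c u}"
    by (auto simp: cross_def inner_prod_def algebra_simps)
  then show ?thesis
    by (simp add: convex_halfspace_gt)
qed

lemma convex_cross_halfplane': "convex {y. cross (y - u) c > 0}"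
proof -
  have "{y. cross (y - u) c > 0} = {y. cross (- c) (y - u) > 0}"
    by (simp add: cross_def algebra_simps)
  then show ?thesis
    by (simp only: convex_cross_halfplane)
qed

lemma connected_open_wedge: "connected {y \<in> ball u \<rho>. cross a (y - u) > 0 \<and> cross (y - u) b > 0}"
proof -
  have "{y \<in> ball u \<rho>. cross a (y - u) > 0 \<and> cross (y - u) b > 0} =
      ball u \<rho> \<inter> {y. cross a (y - u) > 0} \<inter> {y. cross (y - u) b > 0}"
    by auto
  then show ?thesis
    by (simp add: convex_connected convex_Int convex_cross_halfplane convex_cross_halfplane')
qed

lemma connected_inside_iff:
  assumes "connected C" "C \<inter> B = {}" "y \<in> C"
  shows "y \<in> inside B \<longleftrightarrow> C \<subseteq> inside B"
  using assms inside_same_component[of B] unfolding connected_component_def by blast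

lemma small_combination_in_ball:
  fixes u x y :: "'a::real_normed_vector"
  assumes "\<rho> > 0"
  obtains e where "e > 0" "\<And>s t. 0 \<le> s \<Longrightarrow> 0 \<le> t \<Longrightarrow> s + t \<le> e \<Longrightarrow> u + s *\<^sub>R x + t *\<^sub>R y \<in> ball u \<rho>"
proof
  define N where "N = norm x + norm y + 1"
  have N: "N > 0"
    by (simp add: N_def add_nonneg_pos)
  show "\<rho> / (2 * N) > 0"
    using assms N by simp
  fix s t :: real
  assume st: "0 \<le> s" "0 \<le> t" "s + t \<le> \<rho> / (2 * N)"
  have "norm (s *\<^sub>R x + t *\<^sub>R y) \<le> s * norm x + t * norm y"
    using st norm_triangle_ineq[of "s *\<^sub>R x" "t *\<^sub>R y"] by simp
  also have "\<dots> \<le> (s + t) * N"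
    using st by (simp add: N_def algebra_simps add_mono add_increasing2 mult_left_mono)
  also have "\<dots> \<le> \<rho> / (2 * N) * N"
    using st N by (intro mult_right_mono) simp_all
  also have "\<dots> < \<rho>"
    using assms N by simp
  finally show "u + s *\<^sub>R x + t *\<^sub>R y \<in> ball u \<rho>"
    by (simp add: dist_norm norm_minus_commute add.assoc add.commute)
qed

lemma boundary_near_corner:
  assumes "r > 0" and near: "ball u r \<inter> B \<subseteq> closed_segment u p \<union> closed_segment u q"
    and edges: "closed_segment u p \<subseteq> B" "closed_segment u q \<subseteq> B"
    and ab: "cross (p - u) (q - u) > 0"
  obtains \<rho> where "\<rho> > 0"
    "\<And>y. y \<in> ball u \<rho> \<Longrightarrow> y \<in> B \<longleftrightarrow> \<not> corner_inside True True (p - u) (q - u) (y - u)"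
proof
  define a b where "a = p - u" and "b = q - u"
  have "a \<noteq> 0" "b \<noteq> 0"
    using ab by (auto simp: a_def b_def)
  then show "min r (min (norm a) (norm b)) > 0"
    using \<open>r > 0\<close> by simp
  fix y
  assume "y \<in> ball u (min r (min (norm a) (norm b)))"
  then have y: "y \<in> ball u r" "norm (y - u) \<le> norm a" "norm (y - u) \<le> norm b"
    by (auto simp: dist_norm norm_minus_commute)
  have ba: "cross b (- a) > 0"
    using ab by (simp add: a_def b_def cross_def algebra_simps)
  have "y \<in> B \<longleftrightarrow> y \<in> closed_segment u p \<or> y \<in> closed_segment u q"
    using near edges y(1) by blast
  also have "\<dots> \<longleftrightarrow> (\<exists>l\<ge>0. y - u = l *\<^sub>R a) \<or> (\<exists>l\<ge>0. y - u = l *\<^sub>R b)"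
    using y(2,3) by (simp add: closed_segment_near_start a_def b_def)
  also have "\<dots> \<longleftrightarrow>
      (cross a (y - u) = 0 \<and> cross (y - u) b \<ge> 0) \<or> (cross (y - u) b = 0 \<and> cross a (y - u) \<ge> 0)"
    using ray_iff_cross[OF ab[folded a_def b_def]] ray_iff_cross[OF ba]
    by (simp add: cross_minus_right cross_antisym[of b] cross_antisym[of "y - u" a])
  also have "\<dots> \<longleftrightarrow> \<not> corner_inside True True a b (y - u)"
    by (auto simp: corner_inside_def)
  finally show "y \<in> B \<longleftrightarrow> \<not> corner_inside True True (p - u) (q - u) (y - u)"
    by (simp add: a_def b_def)
qed

text \<open>The reflex sector is the union of two open half-discs that share the points near \<open>u - a - b\<close>.\<close>
lemma connected_reflex_sector:
  assumes "cross a b > 0" "\<rho> > 0"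
  shows "connected {y \<in> ball u \<rho>. cross a (y - u) < 0 \<or> cross (y - u) b < 0}"
proof -
  obtain e where "e > 0"
    and e: "\<And>s t. 0 \<le> s \<Longrightarrow> 0 \<le> t \<Longrightarrow> s + t \<le> e \<Longrightarrow> u + s *\<^sub>R (- a) + t *\<^sub>R (- b) \<in> ball u \<rho>"
    using small_combination_in_ball[OF \<open>\<rho> > 0\<close>] by blast
  define H1 where "H1 = ball u \<rho> \<inter> {y. cross (y - u) a > 0}"
  define H2 where "H2 = ball u \<rho> \<inter> {y. cross b (y - u) > 0}"
  have "u + (e / 2) *\<^sub>R (- a) + (e / 2) *\<^sub>R (- b) \<in> H1 \<inter> H2"
    using e[of "e / 2" "e / 2"] \<open>e > 0\<close> assms(1)
    by (simp add: H1_def H2_def cross_bilinear cross_antisym[of b a])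
  then have "connected (H1 \<union> H2)"
    unfolding H1_def H2_def
    by (intro connected_Un convex_connected convex_Int convex_ball convex_cross_halfplane
        convex_cross_halfplane') auto
  moreover have "{y \<in> ball u \<rho>. cross a (y - u) < 0 \<or> cross (y - u) b < 0} = H1 \<union> H2"
    by (auto simp: H1_def H2_def cross_antisym[of _ a] cross_antisym[of b])
  ultimately show ?thesis
    by simp
qed

lemma inside_near_corner:
  assumes ab: "cross a b > 0" and "\<rho> > 0"
    and boundary: "\<And>y. y \<in> ball u \<rho> \<Longrightarrow> y \<in> B \<longleftrightarrow> \<not> corner_inside True True a b (y - u)"
  obtains kin hin where "\<forall>y\<in>ball u \<rho>. y \<in> inside B \<longleftrightarrow> corner_inside kin hin a b (y - u)"
proof -
  define K where "K = {y \<in> ball u \<rho>. cross a (y - u) > 0 \<and> cross (y - u) b > 0}"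
  define H where "H = {y \<in> ball u \<rho>. cross a (y - u) < 0 \<or> cross (y - u) b < 0}"
  have disjoint: "K \<inter> B = {}" "H \<inter> B = {}"
    using boundary by (auto simp: K_def H_def corner_inside_def)
  show ?thesis
  proof (rule that, intro ballI)
    fix y
    assume y: "y \<in> ball u \<rho>"
    consider "y \<in> K" | "y \<in> H" | "\<not> corner_inside True True a b (y - u)"
      using y by (auto simp: K_def H_def corner_inside_def)
    then show "y \<in> inside B \<longleftrightarrow> corner_inside (K \<subseteq> inside B) (H \<subseteq> inside B) a b (y - u)"
    proof cases
      case 1
      then show ?thesis
        using connected_inside_iff[OF connected_open_wedge disjoint(1)[unfolded K_def]]
        by (auto simp: K_def corner_inside_def)
    next
      case 2
      then show ?thesis
        using connected_inside_iff[OF connected_reflex_sector[OF ab \<open>\<rho> > 0\<close>]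
            disjoint(2)[unfolded H_def]]
        by (auto simp: H_def corner_inside_def)
    next
      case 3
      then have "y \<notin> inside B"
        using boundary[OF y] inside_no_overlap[of B] by blast
      moreover have "\<not> corner_inside kin hin a b (y - u)" for kin hin
        using 3 by (auto simp: corner_inside_def)
      ultimately show ?thesis
        by blast
    qed
  qed
qed

lemma small_combinations_avoid_iff:
  fixes u x y :: "'a::real_normed_vector"
  assumes "\<rho> > 0" and near: "\<And>z. z \<in> ball u \<rho> \<Longrightarrow> z \<in> I \<longleftrightarrow> M (z - u)"
    and scale: "\<And>c z. c > 0 \<Longrightarrow> M (c *\<^sub>R z) \<longleftrightarrow> M z"
  shows "(\<exists>e>0. \<forall>s t. 0 \<le> s \<and> 0 \<le> t \<and> s + t \<le> e \<longrightarrow> u + s *\<^sub>R x + t *\<^sub>R y \<notin> I) \<longleftrightarrow>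
    (\<forall>s t. 0 \<le> s \<longrightarrow> 0 \<le> t \<longrightarrow> \<not> M (s *\<^sub>R x + t *\<^sub>R y))"
proof -
  obtain e where "e > 0" and e: "\<And>s t. 0 \<le> s \<Longrightarrow> 0 \<le> t \<Longrightarrow> s + t \<le> e \<Longrightarrow> u + s *\<^sub>R x + t *\<^sub>R y \<in> ball u \<rho>"
    using small_combination_in_ball[OF \<open>\<rho> > 0\<close>] by blast
  have I_iff: "u + s *\<^sub>R x + t *\<^sub>R y \<in> I \<longleftrightarrow> M (s *\<^sub>R x + t *\<^sub>R y)"
    if "0 \<le> s" "0 \<le> t" "s + t \<le> e" for s t
    using near[OF e[OF that]] by (simp add: add.assoc)
  show ?thesis
  proof
    assume "\<exists>e'>0. \<forall>s t. 0 \<le> s \<and> 0 \<le> t \<and> s + t \<le> e' \<longrightarrow> u + s *\<^sub>R x + t *\<^sub>R y \<notin> I"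
    then obtain e' where "e' > 0"
      and e': "\<And>s t. 0 \<le> s \<Longrightarrow> 0 \<le> t \<Longrightarrow> s + t \<le> e' \<Longrightarrow> u + s *\<^sub>R x + t *\<^sub>R y \<notin> I"
      by blast
    show "\<forall>s t. 0 \<le> s \<longrightarrow> 0 \<le> t \<longrightarrow> \<not> M (s *\<^sub>R x + t *\<^sub>R y)"
    proof (intro allI impI notI)
      fix s t :: real
      assume st: "0 \<le> s" "0 \<le> t" and M: "M (s *\<^sub>R x + t *\<^sub>R y)"
      define c where "c = min e e' / (s + t + 1)"
      have "c > 0"
        using st \<open>e > 0\<close> \<open>e' > 0\<close> by (simp add: c_def)
      moreover have "c * (s + t + 1) = min e e'"
        using st by (simp add: c_def)
      then have "c * s + c * t + c = min e e'"
        by (simp add: algebra_simps)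
      ultimately have cst: "0 \<le> c * s" "0 \<le> c * t" "c * s + c * t \<le> e" "c * s + c * t \<le> e'"
        using st by simp_all
      have "M (c *\<^sub>R (s *\<^sub>R x + t *\<^sub>R y))"
        using M scale[OF \<open>c > 0\<close>] by blast
      then have "u + (c * s) *\<^sub>R x + (c * t) *\<^sub>R y \<in> I"
        using I_iff[OF cst(1-3)] by (simp add: scaleR_add_right)
      then show False
        using e'[OF cst(1,2,4)] by blast
    qed
  next
    assume "\<forall>s t. 0 \<le> s \<longrightarrow> 0 \<le> t \<longrightarrow> \<not> M (s *\<^sub>R x + t *\<^sub>R y)"
    then have "\<forall>s t. 0 \<le> s \<and> 0 \<le> t \<and> s + t \<le> e \<longrightarrow> u + s *\<^sub>R x + t *\<^sub>R y \<notin> I"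
      using I_iff by blast
    then show "\<exists>e>0. \<forall>s t. 0 \<le> s \<and> 0 \<le> t \<and> s + t \<le> e \<longrightarrow> u + s *\<^sub>R x + t *\<^sub>R y \<notin> I"
      using \<open>e > 0\<close> by blast
  qed
qed

lemma segment_avoids_imp_not:
  fixes u v :: "'a::real_normed_vector"
  assumes "\<rho> > 0" and near: "\<And>z. z \<in> ball u \<rho> \<Longrightarrow> z \<in> I \<longleftrightarrow> M (z - u)"
    and scale: "\<And>c z. c > 0 \<Longrightarrow> M (c *\<^sub>R z) \<longleftrightarrow> M z"
    and "closed_segment u v \<inter> I = {}"
  shows "\<not> M (v - u)"
proof -
  have "\<exists>e>0. \<forall>s t. 0 \<le> s \<and> 0 \<le> t \<and> s + t \<le> e \<longrightarrow> u + s *\<^sub>R (v - u) + t *\<^sub>R (v - u) \<notin> I"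
  proof (intro exI[of _ 1] conjI allI impI)
    fix s t :: real
    assume "0 \<le> s \<and> 0 \<le> t \<and> s + t \<le> 1"
    then have "u + s *\<^sub>R (v - u) + t *\<^sub>R (v - u) \<in> closed_segment u v"
      unfolding in_segment by (intro exI[of _ "s + t"]) (simp add: algebra_simps)
    then show "u + s *\<^sub>R (v - u) + t *\<^sub>R (v - u) \<notin> I"
      using assms(4) by blast
  qed simp
  then have "\<forall>s t. 0 \<le> s \<longrightarrow> 0 \<le> t \<longrightarrow> \<not> M (s *\<^sub>R (v - u) + t *\<^sub>R (v - u))"
    by (simp only: small_combinations_avoid_iff[where I = I and M = M, OF assms(1) near scale])
  from this[rule_format, of 1 0] show ?thesis
    by simp
qed

lemma cyclic_predecessor:
  fixes n k :: nat
  assumes "3 \<le> n" "k < n"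
  obtains m where "m < n" "(m + 1) mod n = k" "m \<noteq> k" "m \<noteq> (k + 1) mod n" "(k + 1) mod n \<noteq> k"
    "\<And>j. j < n \<Longrightarrow> (j + 1) mod n = k \<Longrightarrow> j = m"
proof
  have next_eq: "(j + 1) mod n = (if j + 1 = n then 0 else j + 1)" if "j < n" for j
    using that by (simp add: mod_if)
  let ?m = "if k = 0 then n - 1 else k - 1"
  show "?m < n" "?m \<noteq> k" "(k + 1) mod n \<noteq> k" "(?m + 1) mod n = k" "?m \<noteq> (k + 1) mod n"
    using assms next_eq[of k] next_eq[of ?m] by auto
  show "j = ?m" if "j < n" "(j + 1) mod n = k" for j
    using that next_eq[of j] by (auto split: if_splits)
qed

lemma simple_polygon_vertex_on_edge:
  assumes P: "simple_polygon P" and k: "k < length P" and j: "j < length P" "P ! k \<in> poly_edge P j"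
  shows "j = k \<or> (j + 1) mod length P = k"
proof (rule ccontr)
  assume jk: "\<not> (j = k \<or> (j + 1) mod length P = k)"
  have "\<forall>i<length P. \<forall>j<length P. i \<noteq> j \<longrightarrow> poly_edge P i \<inter> poly_edge P j =
      (if j = (i + 1) mod length P then {P ! j} else if i = (j + 1) mod length P then {P ! i} else {})"
    using P by (simp add: simple_polygon_def)
  then have "poly_edge P k \<inter> poly_edge P j \<subseteq> {P ! j}"
    using k j jk by auto
  moreover have "P ! k \<in> poly_edge P k"
    by (simp add: poly_edge_def)
  ultimately have "P ! k = P ! j"
    using j by blast
  then show False
    using P k j jk nth_eq_iff_index_eq unfolding simple_polygon_def by metis
qed

lemma simple_polygon_corner:
  assumes P: "simple_polygon P" and u: "u \<in> set P"
  obtains p q r where "p \<in> set P" "q \<in> set P" "p \<noteq> u" "q \<noteq> u" "p \<noteq> q" "r > 0"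
    "closed_segment u p \<subseteq> poly_boundary P" "closed_segment u q \<subseteq> poly_boundary P"
    "ball u r \<inter> poly_boundary P \<subseteq> closed_segment u p \<union> closed_segment u q"
proof -
  define n where "n = length P"
  have n: "3 \<le> n" "distinct P"
    using P unfolding simple_polygon_def n_def by auto
  obtain k where k: "k < n" "P ! k = u"
    using u by (auto simp: n_def in_set_conv_nth)
  obtain m where m: "m < n" "(m + 1) mod n = k" "m \<noteq> k" "m \<noteq> (k + 1) mod n" "(k + 1) mod n \<noteq> k"
    and m_unique: "\<And>j. j < n \<Longrightarrow> (j + 1) mod n = k \<Longrightarrow> j = m"
    using cyclic_predecessor[OF n(1) k(1)] by blast
  define p q where "p = P ! m" and "q = P ! ((k + 1) mod n)"
  have edge_k: "poly_edge P k = closed_segment u q"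
    by (simp add: poly_edge_def q_def k flip: n_def)
  have "P ! ((m + 1) mod n) = u"
    using m(2) k(2) by simp
  then have edge_m: "poly_edge P m = closed_segment u p"
    unfolding poly_edge_def n_def[symmetric] p_def by (simp add: closed_segment_commute)
  have ne: "P ! i \<noteq> P ! j" if "i < n" "j < n" "i \<noteq> j" for i j
    using nth_eq_iff_index_eq[OF n(2)] that by (simp add: n_def)
  have "(k + 1) mod n < n"
    using n(1) by simp
  then have "p \<noteq> u" "q \<noteq> u" "p \<noteq> q"
    using ne[OF m(1) k(1) m(3)] ne[OF _ k(1) m(5)] ne[OF m(1) _ m(4)] by (simp_all add: p_def q_def k(2))
  define J where "J = {j. j < n \<and> j \<noteq> k \<and> j \<noteq> m}"
  have "closed (\<Union>j\<in>J. poly_edge P j)"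
    by (intro closed_UN) (auto simp: J_def poly_edge_def)
  moreover have "u \<notin> poly_edge P j" if "j \<in> J" for j
    using that simple_polygon_vertex_on_edge[OF P, of k j] m_unique[of j] k by (auto simp: J_def n_def)
  ultimately obtain r where "r > 0" "ball u r \<subseteq> - (\<Union>j\<in>J. poly_edge P j)"
    by (metis UN_E ComplI open_Compl open_contains_ball)
  moreover have "poly_boundary P = poly_edge P k \<union> poly_edge P m \<union> (\<Union>j\<in>J. poly_edge P j)"
    using k(1) m(1) by (auto simp: poly_boundary_def J_def n_def)
  ultimately have "ball u r \<inter> poly_boundary P \<subseteq> closed_segment u p \<union> closed_segment u q"
    by (auto simp: edge_k edge_m)
  moreover have "closed_segment u p \<subseteq> poly_boundary P" "closed_segment u q \<subseteq> poly_boundary P"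
    using k(1) m(1) by (auto simp: poly_boundary_def n_def simp flip: edge_k edge_m)
  moreover have "p \<in> set P" "q \<in> set P"
    using m(1) \<open>(k + 1) mod n < n\<close> by (simp_all add: p_def q_def n_def)
  ultimately show ?thesis
    using that \<open>p \<noteq> u\<close> \<open>q \<noteq> u\<close> \<open>p \<noteq> q\<close> \<open>r > 0\<close> by blast
qed

lemma same_side_at_corner_iff:
  assumes "Ob \<in> S" "u \<in> set Ob" "\<And>Ob'. Ob' \<in> S \<Longrightarrow> u \<in> set Ob' \<Longrightarrow> Ob' = Ob"
  shows "same_side S u v w \<longleftrightarrow> (\<exists>e>0. \<forall>s t. 0 \<le> s \<and> 0 \<le> t \<and> s + t \<le> e \<longrightarrow>
    u + s *\<^sub>R (v - u) + t *\<^sub>R (w - u) \<notin> inside (poly_boundary Ob))"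
proof -
  have "{Ob' \<in> S. u \<in> set Ob'} = {Ob}"
    using assms by blast
  then show ?thesis
    unfolding same_side_def
    by (simp add: Ball_def) (metis (mono_tags, lifting) mem_Collect_eq singletonD singletonI)
qed

lemma same_side_no_corner: "(\<And>Ob. Ob \<in> S \<Longrightarrow> u \<notin> set Ob) \<Longrightarrow> same_side S u v w"
  by (simp add: same_side_def)

lemma obstacle_corner_boundary:
  assumes vs: "valid_setting V S" and Ob: "Ob \<in> S" "u \<in> set Ob"
  obtains a b \<rho> where "cross a b > 0" "\<rho> > 0"
    "\<forall>y\<in>ball u \<rho>. y \<in> poly_boundary Ob \<longleftrightarrow> \<not> corner_inside True True a b (y - u)"
proof -
  define B where "B = poly_boundary Ob"
  have "simple_polygon Ob" "set Ob \<subseteq> V"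
    using valid_setting_obstacle[OF vs Ob(1)] by simp_all
  then obtain p q r where pq: "p \<in> set Ob" "q \<in> set Ob" "p \<noteq> u" "q \<noteq> u" "p \<noteq> q" "r > 0"
    and edges: "closed_segment u p \<subseteq> B" "closed_segment u q \<subseteq> B"
    and near: "ball u r \<inter> B \<subseteq> closed_segment u p \<union> closed_segment u q"
    using simple_polygon_corner[OF _ Ob(2)] unfolding B_def by blast
  have "\<not> collinear {u, p, q}"
    using valid_setting_not_collinear[OF vs] pq \<open>set Ob \<subseteq> V\<close> Ob(2) by blast
  then have "cross (p - u) (q - u) \<noteq> 0"
    using cross_eq_0_imp_collinear by blast
  then consider "cross (p - u) (q - u) > 0" | "cross (q - u) (p - u) > 0"
    using cross_antisym[of "q - u" "p - u"] by linarith
  then show ?thesis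
  proof cases
    case 1
    obtain \<rho> where "\<rho> > 0"
      "\<And>y. y \<in> ball u \<rho> \<Longrightarrow> y \<in> B \<longleftrightarrow> \<not> corner_inside True True (p - u) (q - u) (y - u)"
      by (rule boundary_near_corner[OF \<open>r > 0\<close> near edges 1]) blast
    then show ?thesis
      using that[OF 1] unfolding B_def by blast
  next
    case 2
    have "ball u r \<inter> B \<subseteq> closed_segment u q \<union> closed_segment u p"
      using near by blast
    then obtain \<rho> where "\<rho> > 0"
      "\<And>y. y \<in> ball u \<rho> \<Longrightarrow> y \<in> B \<longleftrightarrow> \<not> corner_inside True True (q - u) (p - u) (y - u)"
      by (rule boundary_near_corner[OF \<open>r > 0\<close> _ edges(2,1) 2]) blast
    then show ?thesis
      using that[OF 2] unfolding B_def by blast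
  qed
qed

lemma obstacle_corner_model:
  assumes vs: "valid_setting V S" and Ob: "Ob \<in> S" "u \<in> set Ob"
  obtains kin hin a b where "cross a b > 0"
    "\<And>v w. same_side S u v w \<longleftrightarrow>
       (\<forall>s t. 0 \<le> s \<longrightarrow> 0 \<le> t \<longrightarrow> \<not> corner_inside kin hin a b (s *\<^sub>R (v - u) + t *\<^sub>R (w - u)))"
    "\<And>v. visible S u v \<Longrightarrow> \<not> corner_inside kin hin a b (v - u)"
proof -
  define B where "B = poly_boundary Ob"
  obtain a b \<rho> where ab: "cross a b > 0" and "\<rho> > 0"
    and boundary: "\<forall>y\<in>ball u \<rho>. y \<in> B \<longleftrightarrow> \<not> corner_inside True True a b (y - u)"
    unfolding B_def by (rule obstacle_corner_boundary[OF assms])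
  obtain kin hin where inside: "\<forall>y\<in>ball u \<rho>. y \<in> inside B \<longleftrightarrow> corner_inside kin hin a b (y - u)"
    by (rule inside_near_corner[OF ab \<open>\<rho> > 0\<close> boundary[rule_format]])
  then have near: "\<And>z. z \<in> ball u \<rho> \<Longrightarrow> z \<in> inside B \<longleftrightarrow> corner_inside kin hin a b (z - u)"
    by blast
  have unique: "\<And>Ob'. Ob' \<in> S \<Longrightarrow> u \<in> set Ob' \<Longrightarrow> Ob' = Ob"
    using valid_setting_corner_unique[OF vs] Ob by blast
  show ?thesis
  proof
    show "cross a b > 0"
      by (rule ab)
    show "same_side S u v w \<longleftrightarrow>
      (\<forall>s t. 0 \<le> s \<longrightarrow> 0 \<le> t \<longrightarrow> \<not> corner_inside kin hin a b (s *\<^sub>R (v - u) + t *\<^sub>R (w - u)))" for v w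
    proof -
      have "same_side S u v w \<longleftrightarrow> (\<exists>e>0. \<forall>s t. 0 \<le> s \<and> 0 \<le> t \<and> s + t \<le> e \<longrightarrow>
          u + s *\<^sub>R (v - u) + t *\<^sub>R (w - u) \<notin> inside B)"
        unfolding B_def by (rule same_side_at_corner_iff[OF Ob unique])
      also have "\<dots> \<longleftrightarrow>
          (\<forall>s t. 0 \<le> s \<longrightarrow> 0 \<le> t \<longrightarrow> \<not> corner_inside kin hin a b (s *\<^sub>R (v - u) + t *\<^sub>R (w - u)))"
        by (rule small_combinations_avoid_iff[where M = "corner_inside kin hin a b",
              OF \<open>\<rho> > 0\<close> near corner_inside_scaleR])
      finally show ?thesis .
    qed
    show "\<not> corner_inside kin hin a b (v - u)" if "visible S u v" for v
    proof -
      have "closed_segment u v \<inter> inside B = {}"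
        using that Ob(1) unfolding visible_def B_def by blast
      with \<open>\<rho> > 0\<close> near corner_inside_scaleR show ?thesis
        by (rule segment_avoids_imp_not[where I = "inside B" and M = "corner_inside kin hin a b"])
    qed
  qed
qed

lemma obstacle_corner_classes:
  assumes vs: "valid_setting V S" and Ob: "Ob \<in> S" "u \<in> set Ob"
  obtains X1 X2 z where
    "\<forall>v\<in>X1. \<forall>w\<in>X1. same_side S u v w" "\<forall>v\<in>X2. \<forall>w\<in>X2. same_side S u v w"
    "\<forall>v. visible S u v \<longrightarrow> v \<in> X1 \<union> X2"
    "\<forall>v w b. visible S u v \<and> visible S u w \<and> \<not> same_side S u v w \<and> in_cone b u v \<and> in_cone b u w \<longrightarrow>
      in_cone b u z"
proof -
  obtain kin hin a b where ab: "cross a b > 0"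
    and same_side_iff: "\<And>v w. same_side S u v w \<longleftrightarrow>
       (\<forall>s t. 0 \<le> s \<longrightarrow> 0 \<le> t \<longrightarrow> \<not> corner_inside kin hin a b (s *\<^sub>R (v - u) + t *\<^sub>R (w - u)))"
    and visible: "\<And>v. visible S u v \<Longrightarrow> \<not> corner_inside kin hin a b (v - u)"
    using obstacle_corner_model[OF assms] by metis
  obtain Y1 Y2 where
    Y1: "\<forall>x\<in>Y1. \<forall>y\<in>Y1. \<forall>s\<ge>0. \<forall>t\<ge>0. \<not> corner_inside kin hin a b (s *\<^sub>R x + t *\<^sub>R y)"
    and Y2: "\<forall>x\<in>Y2. \<forall>y\<in>Y2. \<forall>s\<ge>0. \<forall>t\<ge>0. \<not> corner_inside kin hin a b (s *\<^sub>R x + t *\<^sub>R y)"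
    and Y: "\<forall>x. \<not> corner_inside kin hin a b x \<longrightarrow> x \<in> Y1 \<union> Y2"
    by (rule corner_inside_two_classes)
  show ?thesis
  proof (intro that[of "{v. v - u \<in> Y1}" "{v. v - u \<in> Y2}" "u + a"] allI impI ballI, goal_cases)
    case (1 v w)
    then show ?case
      using Y1 by (simp add: same_side_iff)
  next
    case (2 v w)
    then show ?case
      using Y2 by (simp add: same_side_iff)
  next
    case (3 v)
    then show ?case
      using Y visible by blast
  next
    case (4 v w c)
    then obtain s t where "0 \<le> s" "0 \<le> t" "corner_inside kin hin a b (s *\<^sub>R (v - u) + t *\<^sub>R (w - u))"
      by (auto simp: same_side_iff)
    then obtain \<alpha> \<beta> where "\<alpha> \<ge> 0" "\<beta> \<ge> 0" "\<alpha> > 0 \<or> \<beta> > 0" "a = \<alpha> *\<^sub>R (v - u) + \<beta> *\<^sub>R (w - u)"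
      using corner_inside_separated[OF ab] visible 4 by metis
    then show ?case
      using in_cone_nonneg_combination[of c u v w] 4 by simp
  qed
qed

lemma visible_same_side_classes:
  assumes vs: "valid_setting V S"
  obtains X1 X2 z where
    "\<forall>v\<in>X1. \<forall>w\<in>X1. same_side S u v w" "\<forall>v\<in>X2. \<forall>w\<in>X2. same_side S u v w"
    "\<forall>v. visible S u v \<longrightarrow> v \<in> X1 \<union> X2"
    "\<forall>v w b. visible S u v \<and> visible S u w \<and> \<not> same_side S u v w \<and> in_cone b u v \<and> in_cone b u w \<longrightarrow>
      in_cone b u z"
proof (cases "\<exists>Ob\<in>S. u \<in> set Ob")
  case True
  then obtain Ob where "Ob \<in> S" "u \<in> set Ob"
    by blast
  then show ?thesis
    by (rule obstacle_corner_classes[OF vs]) (rule that)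
next
  case False
  then have "same_side S u v w" for v w
    by (blast intro: same_side_no_corner)
  then show ?thesis
    by (intro that[of UNIV "{}"]) auto
qed

section \<open>Counting\<close>

lemma card_minimal_le_1:
  assumes "finite T" "\<And>v w. v \<in> T \<Longrightarrow> w \<in> T \<Longrightarrow> R v w \<Longrightarrow> R w v \<Longrightarrow> v = w"
  shows "card {v \<in> T. \<forall>w\<in>T. R v w} \<le> 1"
  using assms by (auto simp: card_le_Suc0_iff_eq)

text \<open>The cones that the paper regards as two subcones.\<close>
definition split_cone :: "pt set \<Rightarrow> pt list set \<Rightarrow> real \<Rightarrow> pt \<Rightarrow> bool" where
  "split_cone V S b u \<longleftrightarrow> (\<exists>v\<in>V. \<exists>w\<in>V. visible S u v \<and> visible S u w \<and>
     in_cone b u v \<and> in_cone b u w \<and> \<not> same_side S u v w)"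

lemma card_in_cone_le:
  assumes vs: "valid_setting V S" and A: "A \<subseteq> {v \<in> V. visible S u v \<and> in_cone b u v}"
    and cliques: "\<And>T. T \<subseteq> A \<Longrightarrow> \<forall>v\<in>T. \<forall>w\<in>T. same_side S u v w \<Longrightarrow> card T \<le> m"
  shows "card A \<le> (if split_cone V S b u then 2 * m else m)"
proof (cases "split_cone V S b u")
  case True
  obtain X1 X2 :: "pt set" and z :: pt
    where X: "\<forall>v\<in>X1. \<forall>w\<in>X1. same_side S u v w" "\<forall>v\<in>X2. \<forall>w\<in>X2. same_side S u v w"
    and cover: "\<forall>v. visible S u v \<longrightarrow> v \<in> X1 \<union> X2"
    by (rule visible_same_side_classes[OF vs])
  have "finite A"
    using A valid_setting_finite[OF vs] by (auto intro: finite_subset)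
  have "card A \<le> card (A \<inter> X1) + card (A \<inter> X2)"
    using A cover by (intro order_trans[OF card_mono card_Un_le]) (auto simp: \<open>finite A\<close>)
  also have "\<dots> \<le> m + m"
    using X by (intro add_mono cliques) auto
  finally show ?thesis
    using True by simp
next
  case False
  then show ?thesis
    using A by (auto simp: split_cone_def intro!: cliques)
qed

lemma split_cones_congruent:
  assumes vs: "valid_setting V S"
    and "split_cone V S (cone_bis m) u" "split_cone V S (cone_bis n) u"
  shows "m mod 6 = n mod 6"
proof -
  obtain X1 X2 :: "pt set" and z :: pt where
    "\<forall>v w b. visible S u v \<and> visible S u w \<and> \<not> same_side S u v w \<and> in_cone b u v \<and> in_cone b u w \<longrightarrow>
      in_cone b u z"
    by (rule visible_same_side_classes[OF vs])
  then have "in_cone (cone_bis m) u z" "in_cone (cone_bis n) u z"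
    using assms(2,3) unfolding split_cone_def by blast+
  then show ?thesis
    by (rule in_cone_bis_unique)
qed

lemma split_cone_count:
  assumes "valid_setting V S"
  shows "(\<Sum>i<3. if split_cone V S (pos_bis i) u then 2 else 1) +
    (\<Sum>i<3. if split_cone V S (neg_bis i) u then 6 else 3) \<le> (15 :: nat)"
proof -
  define sp where "sp m = split_cone V S (cone_bis m) u" for m
  have "\<not> (sp m \<and> sp n)" if "m mod 6 \<noteq> n mod 6" for m n
    using split_cones_congruent[OF assms, of m u n] that by (auto simp: sp_def)
  from this[of 1 3] this[of 1 5] this[of 1 4] this[of 1 6] this[of 1 8] this[of 3 5]
    this[of 3 4] this[of 3 6] this[of 3 8] this[of 5 4] this[of 5 6] this[of 5 8]
    this[of 4 6] this[of 4 8] this[of 6 8]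
  have "(if sp 1 then 2 else 1) + (if sp 3 then 2 else 1) + (if sp 5 then 2 else 1) +
      (if sp 4 then 6 else 3) + (if sp 6 then 6 else 3) + (if sp 8 then 6 else 3) \<le> (15 :: nat)"
    by simp
  moreover have "(\<Sum>i<3. f i) = f 0 + f 1 + f 2" for f :: "nat \<Rightarrow> nat"
    by (simp add: eval_nat_numeral)
  ultimately show ?thesis
    by (simp add: pos_bis_eq_cone_bis neg_bis_eq_cone_bis flip: sp_def)
qed

definition subcone_closest :: "pt set \<Rightarrow> pt list set \<Rightarrow> real \<Rightarrow> pt \<Rightarrow> pt set" where
  "subcone_closest V S b u = {v \<in> V. in_cone b u v \<and> visible S u v \<and>
     (\<forall>w\<in>subcone_of V S b u v. proj b u v \<le> proj b u w)}"

definition extreme_or_closest :: "pt set \<Rightarrow> pt list set \<Rightarrow> real \<Rightarrow> pt \<Rightarrow> pt \<Rightarrow> bool" where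
  "extreme_or_closest V S b u v \<longleftrightarrow> (let N = {w \<in> subcone_of V S b u v. ginf_edge V S u w} in
     (\<forall>w\<in>N. cross (v - u) (w - u) \<ge> 0) \<or> (\<forall>w\<in>N. cross (v - u) (w - u) \<le> 0) \<or>
     (\<forall>w\<in>N. proj b u v \<le> proj b u w))"

definition kept_neighbours :: "pt set \<Rightarrow> pt list set \<Rightarrow> real \<Rightarrow> pt \<Rightarrow> pt set" where
  "kept_neighbours V S b u = {v \<in> V. in_cone b u v \<and> visible S u v \<and> ginf_edge V S u v \<and>
     extreme_or_closest V S b u v}"

lemma g15_neighbours_subset:
  "{v \<in> V. g15_edge V S u v} \<subseteq>
     (\<Union>i<3. subcone_closest V S (pos_bis i) u) \<union> (\<Union>i<3. kept_neighbours V S (neg_bis i) u)"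
proof
  fix v
  assume "v \<in> {v \<in> V. g15_edge V S u v}"
  then have v: "v \<in> V" "ginf_edge V S u v" "keep_at V S u v"
    by (simp_all add: g15_edge_def)
  show "v \<in> (\<Union>i<3. subcone_closest V S (pos_bis i) u) \<union> (\<Union>i<3. kept_neighbours V S (neg_bis i) u)"
  proof (cases "ginf_choice V S u v")
    case True
    then show ?thesis
      by (auto simp: ginf_choice_def subcone_closest_def)
  next
    case False
    then obtain i where "i < 3" "in_cone (pos_bis i) v u" "visible S v u"
      using v(2) by (auto simp: ginf_edge_def ginf_choice_def)
    then have "in_cone (neg_bis i) u v" "visible S u v"
      by (simp_all add: neg_bis_eq_pos_bis_plus_pi in_cone_opposite visible_sym)
    then have "v \<in> kept_neighbours V S (neg_bis i) u"
      using v \<open>i < 3\<close> by (simp add: kept_neighbours_def keep_at_def extreme_or_closest_def)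
    then show ?thesis
      using \<open>i < 3\<close> by blast
  qed
qed

lemma subcone_closest_clique_card:
  assumes vs: "valid_setting V S" and T: "T \<subseteq> subcone_closest V S (cone_bis m) u"
    and same: "\<forall>v\<in>T. \<forall>w\<in>T. same_side S u v w"
  shows "card T \<le> 1"
proof -
  let ?b = "cone_bis m"
  have "finite T"
    using T valid_setting_finite[OF vs] by (auto simp: subcone_closest_def intro: finite_subset)
  have "proj ?b u v \<le> proj ?b u w" if "v \<in> T" "w \<in> T" for v w
  proof -
    have "w \<in> subcone_of V S ?b u v"
      using that T same by (auto simp: subcone_closest_def subcone_of_def)
    then show ?thesis
      using that T unfolding subcone_closest_def by blast
  qed
  then have "T = {v \<in> T. \<forall>w\<in>T. proj ?b u v \<le> proj ?b u w}"
    by blast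
  also have "card \<dots> \<le> 1"
    using T valid_setting_proj_cone_bis_inj[OF vs] unfolding subcone_closest_def
    by (intro card_minimal_le_1[OF \<open>finite T\<close>]) (blast intro: order.antisym)
  finally show ?thesis .
qed

lemma kept_neighbours_clique_card:
  assumes vs: "valid_setting V S" and "u \<in> V" and T: "T \<subseteq> kept_neighbours V S (cone_bis m) u"
    and same: "\<forall>v\<in>T. \<forall>w\<in>T. same_side S u v w"
  shows "card T \<le> 3"
proof -
  let ?b = "cone_bis m"
  have "finite T"
    using T valid_setting_finite[OF vs] by (auto simp: kept_neighbours_def intro: finite_subset)
  have T_V: "v \<in> V" "v \<noteq> u" if "v \<in> T" for v
    using that T by (auto simp: kept_neighbours_def in_cone_def)
  have cross_eq: "v = w" if "v \<in> T" "w \<in> T" "cross (v - u) (w - u) = 0" for v w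
    using that valid_setting_cross_eq_0[OF vs \<open>u \<in> V\<close>] T_V by blast
  define A1 where "A1 = {v \<in> T. \<forall>w\<in>T. cross (v - u) (w - u) \<ge> 0}"
  define A2 where "A2 = {v \<in> T. \<forall>w\<in>T. cross (v - u) (w - u) \<le> 0}"
  define A3 where "A3 = {v \<in> T. \<forall>w\<in>T. proj ?b u v \<le> proj ?b u w}"
  have "T \<subseteq> {w \<in> subcone_of V S ?b u v. ginf_edge V S u w}" if "v \<in> T" for v
    using that T same by (auto simp: kept_neighbours_def subcone_of_def)
  then have "T \<subseteq> A1 \<union> A2 \<union> A3"
    using T unfolding A1_def A2_def A3_def kept_neighbours_def extreme_or_closest_def Let_def by blast
  moreover have "card A1 \<le> 1"
    unfolding A1_def by (rule card_minimal_le_1[OF \<open>finite T\<close>]) (metis cross_eq cross_nonneg_antisym)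
  moreover have "card A2 \<le> 1"
    unfolding A2_def by (rule card_minimal_le_1[OF \<open>finite T\<close>]) (metis cross_eq cross_nonpos_antisym)
  moreover have "card A3 \<le> 1"
    unfolding A3_def using valid_setting_proj_cone_bis_inj[OF vs] T_V
    by (intro card_minimal_le_1[OF \<open>finite T\<close>]) (blast intro: order.antisym)
  moreover have "finite (A1 \<union> A2 \<union> A3)"
    using \<open>finite T\<close> by (simp add: A1_def A2_def A3_def)
  ultimately show ?thesis
    using card_mono[of "A1 \<union> A2 \<union> A3" T] card_Un_le[of "A1 \<union> A2" A3] card_Un_le[of A1 A2] by simp
qed

lemma card_subcone_closest:
  assumes "valid_setting V S"
  shows "card (subcone_closest V S (cone_bis m) u) \<le> (if split_cone V S (cone_bis m) u then 2 else 1)"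
proof -
  have "subcone_closest V S (cone_bis m) u \<subseteq> {v \<in> V. visible S u v \<and> in_cone (cone_bis m) u v}"
    by (auto simp: subcone_closest_def)
  from card_in_cone_le[OF assms this subcone_closest_clique_card[OF assms, where m = m and u = u]]
  show ?thesis
    by (simp split: if_splits)
qed

lemma card_kept_neighbours:
  assumes "valid_setting V S" "u \<in> V"
  shows "card (kept_neighbours V S (cone_bis m) u) \<le> (if split_cone V S (cone_bis m) u then 6 else 3)"
proof -
  have "kept_neighbours V S (cone_bis m) u \<subseteq> {v \<in> V. visible S u v \<and> in_cone (cone_bis m) u v}"
    by (auto simp: kept_neighbours_def)
  from card_in_cone_le[OF assms(1) this kept_neighbours_clique_card[OF assms, where m = m]]
  show ?thesis
    by (simp split: if_splits)
qed

theorem lemma5: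
  assumes "valid_setting V S" and "u \<in> V"
  shows "degree15 V S u \<le> 15"
proof -
  let ?P = "\<lambda>i. subcone_closest V S (pos_bis i) u" and ?N = "\<lambda>i. kept_neighbours V S (neg_bis i) u"
  have fin: "finite (?P i)" "finite (?N i)" for i
    using valid_setting_finite[OF assms(1)] by (simp_all add: subcone_closest_def kept_neighbours_def)
  have "degree15 V S u \<le> card ((\<Union>i<3. ?P i) \<union> (\<Union>i<3. ?N i))"
    unfolding degree15_def by (intro card_mono g15_neighbours_subset) (simp add: fin)
  also have "\<dots> \<le> (\<Sum>i<3. card (?P i)) + (\<Sum>i<3. card (?N i))"
    by (intro order_trans[OF card_Un_le] add_mono card_UN_le) simp_all
  also have "\<dots> \<le> (\<Sum>i<3. if split_cone V S (pos_bis i) u then 2 else 1) +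
      (\<Sum>i<3. if split_cone V S (neg_bis i) u then 6 else 3)"
    using card_subcone_closest[OF assms(1)] card_kept_neighbours[OF assms]
    by (intro add_mono sum_mono) (simp_all add: pos_bis_eq_cone_bis neg_bis_eq_cone_bis)
  also have "\<dots> \<le> 15"
    by (rule split_cone_count[OF assms(1)])
  finally show ?thesis .
qed

end
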